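(* Let $P$ be a set of $n$ points in $\mathbb R$ and let $H$ be the hypergraph induced by $P$ with respect to intervals (vertex set $P$, hyperedges all nonempty sets $I\cap P$ with $I$ an interval). Then $\mathrm{ch}_{um}(H)\le\log_2 n+1$.
   Context: A coloring $C\colon V\to\mathbb Z_{>0}$ of a hypergraph is unique-maximum if in every hyperedge the maximum color is attained by exactly one vertex. The um-choice number $\mathrm{ch}_{um}(H)$ is the minimum $k$ such that for every family $\{L_v\}_{v\in V}$ of sets of positive integers with $|L_v|\ge k$ there is a unique-maximum coloring $C$ with $C(v)\in L_v$ for all $v$. *)

theory Defs
  imports Complex_Main
begin

text \<open>A hypergraph is given by its vertex set V and its set H of hyperedges.
  A colouring uses positive integers (here naturals; positivity is enforced by the lists).\<close>

definition um_coloring :: "'a set set \<Rightarrow> ('a \<Rightarrow> nat) \<Rightarrow> bool" where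
  "um_coloring H C \<longleftrightarrow> (\<forall>E\<in>H. \<exists>!v. v \<in> E \<and> C v = Max (C ` E))"

text \<open>List sizes: an infinite list counts as having size at least k.\<close>
definition ch_um :: "'a set \<Rightarrow> 'a set set \<Rightarrow> nat" where
  "ch_um V H = (LEAST k. \<forall>L :: 'a \<Rightarrow> nat set.
      (\<forall>v\<in>V. L v \<subseteq> {0<..} \<and> (finite (L v) \<longrightarrow> k \<le> card (L v))) \<longrightarrow>
      (\<exists>C. (\<forall>v\<in>V. C v \<in> L v) \<and> um_coloring H C))"

definition real_interval :: "real set \<Rightarrow> bool" where
  "real_interval I \<longleftrightarrow> (\<forall>x z y. x \<in> I \<longrightarrow> z \<in> I \<longrightarrow> x \<le> y \<longrightarrow> y \<le> z \<longrightarrow> y \<in> I)"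

definition interval_hyperedges :: "real set \<Rightarrow> real set set" where
  "interval_hyperedges P = {E. E \<noteq> {} \<and> (\<exists>I. real_interval I \<and> E = I \<inter> P)}"

end

theory Submission
  imports Defs
begin

(* Proof idea (a weight argument in the spirit of Erdos-Selfridge).
   Give a vertex v with list L v the weight 2^-|L v|.  If the total weight of a
   finite point set P is below 1, then P admits a unique-maximum colouring from
   the lists for intervals: take the largest colour m occurring in any list,
   let S be the points whose list contains m, and deleting m from those lists
   doubles exactly the weights of S.  A balancing argument finds s in S such that
   the doubled weight strictly left of s and strictly right of s are both below 1.
   Colour s with m and recurse on both sides with m removed; every interval
   either contains s (which is then its unique maximum) or lies on one side.
   Lists of size k with 2^k > n have total weight n/2^k < 1, which yields
   ch_um <= k for the least such k, and that k is at most log2 n + 1.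
   The file first proves the gluing facts about unique-maximum colourings,
   then the balancing lemma, then the weight theorem, then the corollary. *)

lemma um_coloring_cong:
  assumes "um_coloring H C" and "\<And>E v. E \<in> H \<Longrightarrow> v \<in> E \<Longrightarrow> C' v = C v"
  shows "um_coloring H C'"
  unfolding um_coloring_def
proof
  fix E assume E: "E \<in> H"
  then have "C' ` E = C ` E" using assms(2) by (auto intro: image_cong)
  with E show "\<exists>!v. v \<in> E \<and> C' v = Max (C' ` E)"
    using assms unfolding um_coloring_def by (metis (no_types, lifting))
qed

lemma unique_max_of_strict_top:
  fixes C :: "'a \<Rightarrow> nat"
  assumes "finite E" "s \<in> E" "\<And>v. v \<in> E \<Longrightarrow> v \<noteq> s \<Longrightarrow> C v < C s"
  shows "\<exists>!v. v \<in> E \<and> C v = Max (C ` E)"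
proof -
  have "Max (C ` E) = C s"
    using assms by (intro Max_eqI) (auto intro: less_imp_le)
  then show ?thesis using assms by (metis less_irrefl)
qed

lemma interval_hyperedge_subset: "E \<in> interval_hyperedges Q \<Longrightarrow> E \<subseteq> Q"
  by (auto simp: interval_hyperedges_def)

lemma interval_hyperedge_one_side:
  assumes E: "E \<in> interval_hyperedges P" and "s \<in> P" "s \<notin> E"
  shows "E \<in> interval_hyperedges {u\<in>P. u < s} \<or> E \<in> interval_hyperedges {u\<in>P. s < u}"
proof -
  obtain I where I: "real_interval I" "E = I \<inter> P" "E \<noteq> {}"
    using E by (auto simp: interval_hyperedges_def)
  have sub: "E \<in> interval_hyperedges Q" if "E \<subseteq> Q" "Q \<subseteq> P" for Q
  proof -
    have "E = I \<inter> Q" using I(2) that by blast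
    then show ?thesis using I(1,3) unfolding interval_hyperedges_def by blast
  qed
  have "(\<forall>x\<in>E. x < s) \<or> (\<forall>x\<in>E. s < x)"
  proof (rule ccontr)
    assume "\<not> ?thesis"
    then obtain x y where xy: "x \<in> E" "y \<in> E" "s \<le> x" "y \<le> s" by auto
    then have "x \<in> I" "y \<in> I" using I(2) by auto
    then have "s \<in> I" using I(1) xy(3,4) unfolding real_interval_def by blast
    then show False using assms(2,3) I(2) by auto
  qed
  then show ?thesis
  proof
    assume "\<forall>x\<in>E. x < s"
    then have "E \<subseteq> {u\<in>P. u < s}" using I(2) by auto
    then show ?thesis using sub by blast
  next
    assume "\<forall>x\<in>E. s < x"
    then have "E \<subseteq> {u\<in>P. s < u}" using I(2) by auto
    then show ?thesis using sub by blast
  qed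
qed

lemma um_coloring_glue:
  assumes "finite P" "s \<in> P"
    and top: "\<And>v. v \<in> P \<Longrightarrow> v \<noteq> s \<Longrightarrow> C v < C s"
    and left: "um_coloring (interval_hyperedges {u\<in>P. u < s}) C"
    and right: "um_coloring (interval_hyperedges {u\<in>P. s < u}) C"
  shows "um_coloring (interval_hyperedges P) C"
  unfolding um_coloring_def
proof
  fix E assume E: "E \<in> interval_hyperedges P"
  then have EP: "E \<subseteq> P" by (rule interval_hyperedge_subset)
  show "\<exists>!v. v \<in> E \<and> C v = Max (C ` E)"
  proof (cases "s \<in> E")
    case True
    show ?thesis
    proof (rule unique_max_of_strict_top)
      show "finite E" using EP assms(1) by (rule finite_subset)
      show "s \<in> E" by fact
      show "C v < C s" if "v \<in> E" "v \<noteq> s" for v using that EP top by blast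
    qed
  next
    case False
    then consider "E \<in> interval_hyperedges {u\<in>P. u < s}" | "E \<in> interval_hyperedges {u\<in>P. s < u}"
      using interval_hyperedge_one_side[OF E \<open>s \<in> P\<close>] by blast
    then show ?thesis
      using left right unfolding um_coloring_def by cases (erule bspec; assumption)+
  qed
qed

text \<open>Doubling the weights on S: if s < t are consecutive points of S, the doubled
  weight left of t plus the doubled weight right of s counts every point of P at
  most twice with its original weight, since no point of S lies strictly
  between s and t.\<close>
lemma doubled_weight_consecutive:
  fixes P S :: "real set" and w :: "real \<Rightarrow> real"
  assumes "finite P" "\<forall>u\<in>P. 0 \<le> w u"
    and gap: "\<And>u. u \<in> S \<Longrightarrow> s < u \<Longrightarrow> t \<le> u"
  defines "w' \<equiv> \<lambda>u. if u \<in> S then 2 * w u else w u"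
  shows "(\<Sum>u\<in>{u\<in>P. u < t}. w' u) + (\<Sum>u\<in>{u\<in>P. s < u}. w' u) \<le> 2 * sum w P"
proof -
  have "(\<Sum>u\<in>{u\<in>P. u < t}. w' u) + (\<Sum>u\<in>{u\<in>P. s < u}. w' u)
      = (\<Sum>u\<in>P. (if u < t then w' u else 0) + (if s < u then w' u else 0))"
    using assms(1) by (simp add: sum.inter_filter sum.distrib)
  also have "\<dots> \<le> (\<Sum>u\<in>P. 2 * w u)"
  proof (rule sum_mono)
    fix u assume "u \<in> P"
    then have "0 \<le> w u" using assms(2) by blast
    moreover have "u \<in> S \<Longrightarrow> \<not> (u < t \<and> s < u)" using gap by force
    ultimately show "(if u < t then w' u else 0) + (if s < u then w' u else 0) \<le> 2 * w u"
      unfolding w'_def by auto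
  qed
  finally show ?thesis by (simp add: sum_distrib_left)
qed

lemma doubled_weight_off_S:
  fixes w :: "'a \<Rightarrow> real"
  assumes "finite P" "\<forall>u\<in>P. 0 \<le> w u" "A \<subseteq> P" "A \<inter> S = {}"
  shows "(\<Sum>u\<in>A. if u \<in> S then 2 * w u else w u) \<le> sum w P"
proof -
  have "(\<Sum>u\<in>A. if u \<in> S then 2 * w u else w u) = sum w A"
    using assms(4) by (intro sum.cong) auto
  also have "\<dots> \<le> sum w P" using assms(1-3) by (intro sum_mono2) auto
  finally show ?thesis .
qed

text \<open>Take the largest s \<in> S whose left part is light; the
  next point of S (if any) has a heavy left part, which forces a light right
  part of s by the previous lemma.\<close>
lemma balanced_split_point:
  fixes P S :: "real set" and w :: "real \<Rightarrow> real"
  assumes P: "finite P" and w: "\<forall>u\<in>P. 0 \<le> w u" "sum w P < 1"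
    and S: "S \<subseteq> P" "S \<noteq> {}"
  defines "w' \<equiv> \<lambda>u. if u \<in> S then 2 * w u else w u"
  shows "\<exists>s\<in>S. (\<Sum>u\<in>{u\<in>P. u < s}. w' u) < 1 \<and> (\<Sum>u\<in>{u\<in>P. s < u}. w' u) < 1"
proof -
  have Sfin: "finite S" using P S(1) by (rule finite_subset[rotated])
  define G where "G = {s\<in>S. (\<Sum>u\<in>{u\<in>P. u < s}. w' u) < 1}"
  have "Min S \<in> G"
  proof -
    have "{u\<in>P. u < Min S} \<inter> S = {}" using Sfin by (auto dest: Min_le)
    then have "(\<Sum>u\<in>{u\<in>P. u < Min S}. w' u) \<le> sum w P"
      unfolding w'_def using P w(1) by (intro doubled_weight_off_S) auto
    then show ?thesis using w(2) Sfin S(2) by (simp add: G_def)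
  qed
  have Gfin: "finite G" using Sfin by (simp add: G_def)
  define s where "s = Max G"
  have "s \<in> G" using Gfin \<open>Min S \<in> G\<close> unfolding s_def by (intro Max_in) auto
  then have sS: "s \<in> S" and left: "(\<Sum>u\<in>{u\<in>P. u < s}. w' u) < 1" by (auto simp: G_def)
  have "(\<Sum>u\<in>{u\<in>P. s < u}. w' u) < 1"
  proof (cases "\<exists>t\<in>S. s < t")
    case False
    then have "{u\<in>P. s < u} \<inter> S = {}" by auto
    then have "(\<Sum>u\<in>{u\<in>P. s < u}. w' u) \<le> sum w P"
      unfolding w'_def using P w(1) by (intro doubled_weight_off_S) auto
    then show ?thesis using w(2) by linarith
  next
    case True
    define T where "T = {t\<in>S. s < t}"
    have T: "finite T" "T \<noteq> {}" using Sfin True by (auto simp: T_def)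
    define t where "t = Min T"
    have tT: "t \<in> T" using T unfolding t_def by (rule Min_in)
    have gap: "\<And>u. u \<in> S \<Longrightarrow> s < u \<Longrightarrow> t \<le> u" using T by (auto simp: t_def T_def)
    have "t \<notin> G"
    proof
      assume "t \<in> G"
      then have "t \<le> s" using Gfin unfolding s_def by (rule Max_ge[rotated])
      then show False using tT by (simp add: T_def)
    qed
    then have "1 \<le> (\<Sum>u\<in>{u\<in>P. u < t}. w' u)" using tT by (auto simp: G_def T_def)
    moreover have "(\<Sum>u\<in>{u\<in>P. u < t}. w' u) + (\<Sum>u\<in>{u\<in>P. s < u}. w' u) \<le> 2 * sum w P"
      unfolding w'_def using P w(1) gap by (rule doubled_weight_consecutive)
    ultimately show ?thesis using w(2) by linarith
  qed
  with sS left show ?thesis by blast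
qed

lemma half_power_card_remove:
  assumes "finite A" "m \<in> A"
  shows "(1/2::real) ^ card (A - {m}) = 2 * (1/2) ^ card A"
proof -
  have "card A = Suc (card (A - {m}))" using assms by (rule card.remove)
  then show ?thesis by simp
qed

text \<open>In a family of total weight below 1 every list is nonempty, since an empty
  list alone has weight 1.\<close>
lemma light_lists_nonempty:
  assumes "finite P" "(\<Sum>v\<in>P. (1/2::real) ^ card (L v)) < 1" "v \<in> P"
  shows "L v \<noteq> {}"
proof
  assume "L v = {}"
  moreover have "(1/2::real) ^ card (L v) \<le> (\<Sum>v\<in>P. (1/2::real) ^ card (L v))"
    using assms(1,3) by (intro member_le_sum) auto
  ultimately show False using assms(2) by simp
qed

lemma extend_by_top_colour:
  fixes P :: "real set" and L :: "real \<Rightarrow> nat set"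
  assumes "finite P" "s \<in> P" "m \<in> L s" and m_top: "\<And>v x. v \<in> P \<Longrightarrow> x \<in> L v \<Longrightarrow> x \<le> m"
    and CA: "\<forall>v\<in>{u\<in>P. u < s}. CA v \<in> L v - {m}"
      "um_coloring (interval_hyperedges {u\<in>P. u < s}) CA"
    and CB: "\<forall>v\<in>{u\<in>P. s < u}. CB v \<in> L v - {m}"
      "um_coloring (interval_hyperedges {u\<in>P. s < u}) CB"
  shows "\<exists>C. (\<forall>v\<in>P. C v \<in> L v) \<and> um_coloring (interval_hyperedges P) C"
proof -
  define C where "C u = (if u < s then CA u else if s < u then CB u else m)" for u
  have C_other: "C u \<in> L u - {m}" if "u \<in> P" "u \<noteq> s" for u
    using that CA(1) CB(1) by (cases "u < s") (auto simp: C_def)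
  have C_in_L: "\<forall>v\<in>P. C v \<in> L v"
    using C_other \<open>m \<in> L s\<close> by (metis C_def DiffD1 less_irrefl)
  have top: "C v < C s" if "v \<in> P" "v \<noteq> s" for v
    using C_other[OF that] m_top[OF that(1)] by (fastforce simp: C_def)
  have "um_coloring (interval_hyperedges P) C"
  proof (rule um_coloring_glue[OF assms(1,2)])
    show "C v < C s" if "v \<in> P" "v \<noteq> s" for v using that by (rule top)
    show "um_coloring (interval_hyperedges {u\<in>P. u < s}) C"
      using CA(2) by (rule um_coloring_cong) (auto simp: C_def dest!: interval_hyperedge_subset)
    show "um_coloring (interval_hyperedges {u\<in>P. s < u}) C"
      using CB(2) by (rule um_coloring_cong) (auto simp: C_def dest!: interval_hyperedge_subset)
  qed
  with C_in_L show ?thesis by blast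
qed

text \<open>Induction on |P|,
  splitting at a balanced point carrying the largest colour.\<close>
theorem um_colorable_if_light:
  fixes P :: "real set" and L :: "real \<Rightarrow> nat set"
  assumes "finite P" "\<forall>v\<in>P. finite (L v)" "(\<Sum>v\<in>P. (1/2::real) ^ card (L v)) < 1"
  shows "\<exists>C. (\<forall>v\<in>P. C v \<in> L v) \<and> um_coloring (interval_hyperedges P) C"
  using assms
proof (induction "card P" arbitrary: P L rule: less_induct)
  case less
  define w where "w u = (1/2::real) ^ card (L u)" for u
  have w_nonneg: "\<forall>u\<in>P. 0 \<le> w u" by (simp add: w_def)
  have light: "sum w P < 1" using less.prems(3) by (simp add: w_def)
  show ?case
  proof (cases "P = {}")
    case True
    then show ?thesis by (auto simp: um_coloring_def interval_hyperedges_def)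
  next
    case False
    define m where "m = Max (\<Union>(L ` P))"
    have Ufin: "finite (\<Union>(L ` P))" using less.prems(1,2) by blast
    have m_top: "x \<le> m" if "v \<in> P" "x \<in> L v" for v x
      using Ufin that unfolding m_def by (intro Max_ge) auto
    have "m \<in> \<Union>(L ` P)" using Ufin False light_lists_nonempty[OF less.prems(1,3)] unfolding m_def by (intro Max_in) auto
    define S where "S = {v\<in>P. m \<in> L v}"
    have S: "S \<subseteq> P" "S \<noteq> {}" using \<open>m \<in> \<Union>(L ` P)\<close> by (auto simp: S_def)
    define L' where "L' u = L u - {m}" for u
    have weight_L': "(1/2::real) ^ card (L' u) = (if u \<in> S then 2 * w u else w u)"
      if "u \<in> P" for u
      using that less.prems(2) half_power_card_remove[of "L u" m]
      by (auto simp: L'_def S_def w_def)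
    obtain s where sS: "s \<in> S"
      and left: "(\<Sum>u\<in>{u\<in>P. u < s}. if u \<in> S then 2 * w u else w u) < 1"
      and right: "(\<Sum>u\<in>{u\<in>P. s < u}. if u \<in> S then 2 * w u else w u) < 1"
      using balanced_split_point[OF less.prems(1) w_nonneg light S] by blast
    have sP: "s \<in> P" using sS S(1) by blast
    have recurse: "\<exists>C. (\<forall>v\<in>A. C v \<in> L' v) \<and> um_coloring (interval_hyperedges A) C"
      if A: "A \<subseteq> P - {s}" "(\<Sum>u\<in>A. if u \<in> S then 2 * w u else w u) < 1" for A
    proof -
      have "card A < card P"
        using A(1) sP less.prems(1) by (intro psubset_card_mono) auto
      moreover have "finite A" using A(1) less.prems(1) by (meson finite_Diff finite_subset)
      moreover have "\<forall>v\<in>A. finite (L' v)" using A(1) less.prems(2) by (auto simp: L'_def)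
      moreover have "(\<Sum>v\<in>A. (1/2::real) ^ card (L' v)) < 1"
        using A weight_L' by (subst sum.cong[OF refl]) auto
      ultimately show ?thesis by (rule less.hyps)
    qed
    obtain CA where CA: "\<forall>v\<in>{u\<in>P. u < s}. CA v \<in> L' v"
      "um_coloring (interval_hyperedges {u\<in>P. u < s}) CA"
      using recurse[OF _ left] by auto
    obtain CB where CB: "\<forall>v\<in>{u\<in>P. s < u}. CB v \<in> L' v"
      "um_coloring (interval_hyperedges {u\<in>P. s < u}) CB"
      using recurse[OF _ right] by auto
    show ?thesis
      using extend_by_top_colour[OF less.prems(1) sP _ m_top] sS CA CB by (auto simp: S_def L'_def)
  qed
qed

text \<open>Lists of size at least k (or infinite) with n < 2^k guarantee a colouring,
  so ch_um is at most k: shrink every list to exactly k colours, giving total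
  weight n/2^k < 1.\<close>
lemma ch_um_intervals_le:
  fixes P :: "real set"
  assumes "finite P" "real (card P) < 2 ^ k"
  shows "ch_um P (interval_hyperedges P) \<le> k"
  unfolding ch_um_def
proof (rule Least_le, intro allI impI)
  fix L :: "real \<Rightarrow> nat set"
  assume H: "\<forall>v\<in>P. L v \<subseteq> {0<..} \<and> (finite (L v) \<longrightarrow> k \<le> card (L v))"
  have "\<exists>B. finite B \<and> card B = k \<and> B \<subseteq> L v" if "v \<in> P" for v
  proof (cases "finite (L v)")
    case True
    then have "k \<le> card (L v)" using H that by blast
    then obtain B where "B \<subseteq> L v" "card B = k" by (rule obtain_subset_with_card_n)
    then show ?thesis using True finite_subset by blast
  next
    case False
    then show ?thesis by (rule infinite_arbitrarily_large)
  qed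
  then obtain L0 where L0: "\<forall>v\<in>P. finite (L0 v) \<and> card (L0 v) = k \<and> L0 v \<subseteq> L v"
    using bchoice[of P "\<lambda>v B. finite B \<and> card B = k \<and> B \<subseteq> L v"] by blast
  have "(\<Sum>v\<in>P. (1/2::real) ^ card (L0 v)) = (\<Sum>v\<in>P. (1/2) ^ k)"
    using L0 by (intro sum.cong) auto
  also have "\<dots> = real (card P) / 2 ^ k" by (simp add: power_divide)
  also have "\<dots> < 1" using assms(2) by simp
  finally have "(\<Sum>v\<in>P. (1/2::real) ^ card (L0 v)) < 1" .
  moreover have "\<forall>v\<in>P. finite (L0 v)" using L0 by blast
  ultimately obtain C where "\<forall>v\<in>P. C v \<in> L0 v" "um_coloring (interval_hyperedges P) C"
    using um_colorable_if_light[OF assms(1)] by blast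
  then show "\<exists>C. (\<forall>v\<in>P. C v \<in> L v) \<and> um_coloring (interval_hyperedges P) C"
    using L0 by blast
qed

text \<open>For every n there is an exponent k with n < 2^k and k \<le> log2 n + 1
  (with the convention log 2 0 = 0 of the library, k = 0 works for n = 0).\<close>
lemma exponent_above_log:
  "\<exists>k::nat. real n < 2 ^ k \<and> real k \<le> log 2 (real n) + 1"
proof (cases "n = 0")
  case True
  then show ?thesis by (intro exI[of _ 0]) (simp add: log_def)
next
  case False
  define k where "k = nat \<lfloor>log 2 (real n)\<rfloor> + 1"
  have k: "real k = real_of_int \<lfloor>log 2 (real n)\<rfloor> + 1"
    using False by (simp add: k_def)
  then have "log 2 (real n) < real k" by linarith
  then have "2 powr log 2 (real n) < 2 powr real k" by simp
  then have "real n < 2 ^ k" using False by (simp add: powr_realpow)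
  moreover have "real k \<le> log 2 (real n) + 1" using k by linarith
  ultimately show ?thesis by blast
qed

theorem corollary3p5:
  fixes P :: "real set" and n :: nat
  assumes "finite P" and "card P = n"
  shows "real (ch_um P (interval_hyperedges P)) \<le> log 2 (real n) + 1"
proof -
  obtain k :: nat where k: "real n < 2 ^ k" "real k \<le> log 2 (real n) + 1"
    using exponent_above_log by blast
  have "ch_um P (interval_hyperedges P) \<le> k"
    using assms k(1) by (intro ch_um_intervals_le) auto
  then show ?thesis using k(2) by linarith
qed

end
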